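(* Let $\mathcal I$ be a finite set of $N$ followers. For each $i\in\mathcal I$ let $\mathcal X_i=\{x^i\in\mathbb{R}^{m_F}\mid \mathbf 1^Tx^i=b_i,\ G_ix^i\le h_i\}$ (i.e. $A_i=\mathbf 1^T$), with $\mathcal X_i$ nonempty, compact and satisfying Slater's constraint qualification. Let follower $i$ have cost $$J^i(x^i,x^{-i},\pi)=\tfrac12 (x^i)^TPx^i+(x^i)^TQ\sigma(x^{-i})+r_i^Tx^i+(x^i)^TS\pi,\qquad \sigma(x^{-i})=\sum_{j\ne i}x^j,$$ where $P=P^T\succ0$, $Q=Q^T\succeq0$, $P\succ Q$, $r_i\in\mathbb{R}^{m_F}$, and $S$ is a diagonal matrix with $S\succ 0$ common to all followers. Let $G_0(\pi)$ be the game in which each follower $i$ minimizes $J^i$ over $x^i\in\mathcal X_i$ given the others' strategies. Then for every price vector $\pi$ and every $\alpha\in\mathbb{R}$, the vectors $\pi$ and $\bar\pi=\pi+\alpha v$, where $v_k=1/S_{kk}$, yield the same Nash equilibrium of $G_0$.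
   Context: A joint strategy $x^*=\mathrm{col}((x^{i*})_i)$ with $x^{i*}\in\mathcal X_i$ is a Nash equilibrium of $G_0(\pi)$ if for all $i$ and all $x^i\in\mathcal X_i$, $J^i(x^{i*},x^{-i*},\pi)\le J^i(x^i,x^{-i*},\pi)$. Under these hypotheses $G_0(\pi)$ has a unique Nash equilibrium for each $\pi$. *)

theory Defs
  imports "HOL-Analysis.Analysis"
begin

text \<open>Strategy space R^{m_F} is modelled as real^'m; followers are indexed by a finite type 'n.\<close>

definition feas_set :: "real \<Rightarrow> nat \<Rightarrow> (nat \<Rightarrow> real^'m) \<Rightarrow> (nat \<Rightarrow> real) \<Rightarrow> (real^'m) set" where
  "feas_set b p G h = {x. sum (\<lambda>k. x $ k) UNIV = b \<and> (\<forall>k<p. G k \<bullet> x \<le> h k)}"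

definition slater :: "real \<Rightarrow> nat \<Rightarrow> (nat \<Rightarrow> real^'m) \<Rightarrow> (nat \<Rightarrow> real) \<Rightarrow> bool" where
  "slater b p G h \<longleftrightarrow> (\<exists>x. sum (\<lambda>k. x $ k) UNIV = b \<and> (\<forall>k<p. G k \<bullet> x < h k))"

definition pos_def :: "real^'m^'m \<Rightarrow> bool" where
  "pos_def M \<longleftrightarrow> (\<forall>z. z \<noteq> 0 \<longrightarrow> z \<bullet> (M *v z) > 0)"

definition pos_semidef :: "real^'m^'m \<Rightarrow> bool" where
  "pos_semidef M \<longleftrightarrow> (\<forall>z. z \<bullet> (M *v z) \<ge> 0)"

definition is_diag :: "real^'m^'m \<Rightarrow> bool" where
  "is_diag M \<longleftrightarrow> (\<forall>k l. k \<noteq> l \<longrightarrow> M $ k $ l = 0)"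

definition sigma_others :: "('n::finite \<Rightarrow> real^'m) \<Rightarrow> 'n \<Rightarrow> real^'m" where
  "sigma_others x i = (\<Sum>j\<in>UNIV - {i}. x j)"

definition follower_cost ::
  "real^'m^'m \<Rightarrow> real^'m^'m \<Rightarrow> ('n::finite \<Rightarrow> real^'m) \<Rightarrow> real^'m^'m
   \<Rightarrow> 'n \<Rightarrow> ('n \<Rightarrow> real^'m) \<Rightarrow> real^'m \<Rightarrow> real" where
  "follower_cost P Q r S i x \<pi> =
     (1/2) * (x i \<bullet> (P *v x i)) + x i \<bullet> (Q *v sigma_others x i) + r i \<bullet> x i + x i \<bullet> (S *v \<pi>)"

definition is_NE ::
  "('n::finite \<Rightarrow> (real^'m) set) \<Rightarrow> ('n \<Rightarrow> ('n \<Rightarrow> real^'m) \<Rightarrow> real^'m \<Rightarrow> real)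
   \<Rightarrow> real^'m \<Rightarrow> ('n \<Rightarrow> real^'m) \<Rightarrow> bool" where
  "is_NE X J \<pi> x \<longleftrightarrow> (\<forall>i. x i \<in> X i) \<and>
     (\<forall>i. \<forall>y\<in>X i. J i x \<pi> \<le> J i (x(i := y)) \<pi>)"

end

theory Submission
  imports Defs
begin

text \<open>Since \<open>S\<close> is diagonal with positive diagonal, \<open>S v\<close> is the all-ones vector, so
  shifting the price by \<open>\<alpha> v\<close> adds \<open>\<alpha> \<Sum>\<^sub>k x\<^sup>i\<^sub>k = \<alpha> b\<^sub>i\<close> to the cost of follower \<open>i\<close>
  at every feasible strategy. This offset does not depend on the strategy, so it changes
  no best response and hence no Nash equilibrium. The hypotheses on \<open>P\<close>, \<open>Q\<close> and the
  feasible sets only make the equilibrium exist and be unique; the invariance does not use them.\<close>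

lemma pos_def_diag_pos:
  assumes "pos_def (S::real^'m^'m)"
  shows "S $ k $ k > 0"
proof -
  have "axis k (1::real) \<noteq> 0" by (simp add: axis_eq_0_iff)
  then have "axis k 1 \<bullet> (S *v axis k 1) > 0" using assms unfolding pos_def_def by blast
  moreover have "S *v axis k 1 = column k S"
    by (simp add: matrix_vector_mult_basis)
  ultimately show ?thesis by (simp add: inner_axis' column_def)
qed

lemma diag_mult_inverse_diag:
  assumes "is_diag (S::real^'m^'m)" and "\<And>k. S $ k $ k \<noteq> 0"
  shows "S *v (\<chi> k. 1 / S $ k $ k) = (\<chi> k. 1)"
proof -
  have "(\<Sum>j\<in>UNIV. S $ k $ j * (1 / S $ j $ j)) = 1" for k
  proof -
    have "(\<Sum>j\<in>UNIV. S $ k $ j * (1 / S $ j $ j)) = S $ k $ k * (1 / S $ k $ k)"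
      using assms(1) by (subst sum.remove[of UNIV k]) (auto simp: is_diag_def intro!: sum.neutral)
    also have "\<dots> = 1" using assms(2) by simp
    finally show ?thesis .
  qed
  then show ?thesis by (simp add: matrix_vector_mult_def vec_eq_iff)
qed

lemma follower_cost_price_shift:
  "follower_cost P Q r S i x (\<pi> + w) = follower_cost P Q r S i x \<pi> + x i \<bullet> (S *v w)"
  by (simp add: follower_cost_def matrix_vector_right_distrib inner_add_right)

lemma inner_ones: "x \<bullet> (\<chi> k. 1) = (\<Sum>k\<in>UNIV. x $ k)"
  by (simp add: inner_vec_def)

lemma is_NE_cost_offset:
  assumes "\<And>i z. z i \<in> X i \<Longrightarrow> J i z \<pi>' = J i z \<pi> + c i"
  shows "is_NE X J \<pi>' x \<longleftrightarrow> is_NE X J \<pi> x"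
proof -
  have "J i x \<pi>' \<le> J i (x(i := y)) \<pi>' \<longleftrightarrow> J i x \<pi> \<le> J i (x(i := y)) \<pi>"
    if "x i \<in> X i" "y \<in> X i" for i y
    using assms[of x i] assms[of "x(i := y)" i] that by simp
  then show ?thesis unfolding is_NE_def by blast
qed

theorem corollary1:
  fixes b :: "'n::finite \<Rightarrow> real"
    and p :: "'n \<Rightarrow> nat"
    and G :: "'n \<Rightarrow> nat \<Rightarrow> real^'m"
    and h :: "'n \<Rightarrow> nat \<Rightarrow> real"
    and P Q S :: "real^'m^'m"
    and r :: "'n \<Rightarrow> real^'m"
    and \<pi> :: "real^'m" and \<alpha> :: real
  assumes nonempty: "\<And>i. feas_set (b i) (p i) (G i) (h i) \<noteq> {}"
    and compact: "\<And>i. compact (feas_set (b i) (p i) (G i) (h i))"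
    and slater: "\<And>i. slater (b i) (p i) (G i) (h i)"
    and P_sym: "transpose P = P" and P_pd: "pos_def P"
    and Q_sym: "transpose Q = Q" and Q_psd: "pos_semidef Q"
    and PQ: "pos_def (P - Q)"
    and S_diag: "is_diag S" and S_pd: "pos_def S"
  shows "\<forall>x. is_NE (\<lambda>i. feas_set (b i) (p i) (G i) (h i)) (follower_cost P Q r S) \<pi> x
          \<longleftrightarrow> is_NE (\<lambda>i. feas_set (b i) (p i) (G i) (h i)) (follower_cost P Q r S)
                 (\<pi> + \<alpha> *\<^sub>R (\<chi> k. 1 / S $ k $ k)) x"
proof
  fix x
  have S_v: "S *v (\<chi> k. 1 / S $ k $ k) = (\<chi> k. 1)"
    using diag_mult_inverse_diag[OF S_diag] pos_def_diag_pos[OF S_pd] by (metis less_irrefl)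
  have "follower_cost P Q r S i z (\<pi> + \<alpha> *\<^sub>R (\<chi> k. 1 / S $ k $ k))
      = follower_cost P Q r S i z \<pi> + \<alpha> * b i"
    if "z i \<in> feas_set (b i) (p i) (G i) (h i)" for i z
    using that by (simp add: follower_cost_price_shift matrix_vector_mult_scaleR S_v inner_ones
        feas_set_def)
  then show "is_NE (\<lambda>i. feas_set (b i) (p i) (G i) (h i)) (follower_cost P Q r S) \<pi> x
          \<longleftrightarrow> is_NE (\<lambda>i. feas_set (b i) (p i) (G i) (h i)) (follower_cost P Q r S)
                 (\<pi> + \<alpha> *\<^sub>R (\<chi> k. 1 / S $ k $ k)) x"
    by (intro is_NE_cost_offset[symmetric])
qed

end
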